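(* Let $N$ be a $4$-manifold, $\rho$ a twisted scalar density of weight $1$, $A,B\in\Omega_2(N)$, $f\in\widetilde C^\infty(N)$, and let $\kappa\in\widetilde\Omega^2_2(N)$ be defined by $\kappa=\rho\,(\overline A\otimes B+\overline B\otimes A)+f\operatorname{Id}$, i.e. in local coordinates $\kappa^{ij}_{rs}=\rho\,\varepsilon_{rsab}(A^{ab}B^{ij}+A^{ij}B^{ab})+f(\delta^i_r\delta^j_s-\delta^i_s\delta^j_r)$. If $\kappa|_p=0$ at a point $p\in N$, then $f|_p=0$, and moreover $\rho|_p=0$ or $A|_p=0$ or $B|_p=0$.
   Context: $N$ is a smooth 4-manifold; Einstein summation; $\varepsilon_{ijkl}$ is the Levi-Civita permutation symbol. A twisted scalar density $\rho$ of weight $1$ is given in each chart by a function transforming as $\tilde\rho=\operatorname{sgn}\det(\partial x^a/\partial\tilde x^b)\,\det(\partial x^i/\partial\tilde x^j)\,\rho$. $\widetilde C^\infty(N)$ denotes twisted functions (transforming with the factor $\operatorname{sgn}\det(\partial x^a/\partial\tilde x^b)$). $\Omega_2(N)$ denotes bivector fields $A=\frac12A^{ij}\partial_i\wedge\partial_j$. $\widetilde\Omega^2_2(N)$ is the space of twisted tensor fields written locally as $\frac18\kappa^{ij}_{rs}\,dx^r\wedge dx^s\otimes\partial_i\wedge\partial_j$ with components antisymmetric in $ij$ and in $rs$; $\operatorname{Id}$ denotes the identity with components $\delta^i_r\delta^j_s-\delta^i_s\delta^j_r$. *)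

theory Defs
  imports Complex_Main
begin

text \<open>Pointwise (chart) description. Coordinate indices are 0,1,2,3 (naturals below 4).\<close>

definition levi_civita :: "nat \<Rightarrow> nat \<Rightarrow> nat \<Rightarrow> nat \<Rightarrow> real" where
  "levi_civita a b c d =
     (let xs = [a, b, c, d] in
      if distinct xs \<and> set xs \<subseteq> {..<4}
      then (-1) ^ card {(i, j). i < j \<and> j < 4 \<and> xs ! j < xs ! i}
      else 0)"

definition kron :: "nat \<Rightarrow> nat \<Rightarrow> real" where
  "kron i j = (if i = j then 1 else 0)"

definition antisym4 :: "(nat \<Rightarrow> nat \<Rightarrow> real) \<Rightarrow> bool" where
  "antisym4 A \<longleftrightarrow> (\<forall>i<4. \<forall>j<4. A i j = - A j i)"

definition zero4 :: "(nat \<Rightarrow> nat \<Rightarrow> real) \<Rightarrow> bool" where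
  "zero4 A \<longleftrightarrow> (\<forall>i<4. \<forall>j<4. A i j = 0)"

definition kappa :: "real \<Rightarrow> (nat \<Rightarrow> nat \<Rightarrow> real) \<Rightarrow> (nat \<Rightarrow> nat \<Rightarrow> real) \<Rightarrow> real
    \<Rightarrow> nat \<Rightarrow> nat \<Rightarrow> nat \<Rightarrow> nat \<Rightarrow> real" where
  "kappa \<rho> A B f i j r s =
     \<rho> * (\<Sum>a<4. \<Sum>b<4. levi_civita r s a b * (A a b * B i j + A i j * B a b))
     + f * (kron i r * kron j s - kron i s * kron j r)"

end

theory Submission imports Defs begin

(* Index a bivector by pairs I = (i,j).  Writing dual X r s = eps_rsab X^ab (the
   bar of the paper), the components of kappa read
     kappa_{I,R} = rho (dual A_R B_I + A_I dual B_R) + f delta_{IR}.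
   (1) f = 0: on the 3x3 block I = (0,i), R = (0,j) (i,j = 1..3) the rho-part
       u v^T + a w^T has rank at most two, while kappa = 0 forces it to equal
       -f times the identity; a rank-two 3x3 matrix is not a nonzero scalar
       matrix (its determinant vanishes).  No antisymmetry is needed here.
   (2) With f = 0 and rho ~= 0 we get dual A_R B_I + A_I dual B_R = 0.  For an
       antisymmetric X every upper component X k l is a fixed nonzero multiple
       of some dual component dual X r s (Hodge duality), so a_I b_J + b_I a_J = 0
       for a = A, b = B on all upper pairs; such a symmetric product vanishes
       only if a = 0 or b = 0, and antisymmetry extends this to all components. *)

lemma sum_lessThan_4: "(\<Sum>a<(4::nat). g a) = g 0 + g 1 + g 2 + (g 3::real)"
  by (simp add: eval_nat_numeral)

lemma inversion_pairs_4:
  "{(i::nat, j). i < j \<and> j < 4 \<and> P i j}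
     = set (filter (\<lambda>(i,j). P i j) [(0,1),(0,2),(0,3),(1,2),(1,3),(2,3)])"
  by (auto simp: less_Suc_eq numeral_eq_Suc)

text \<open>A form of the Levi-Civita symbol that the simplifier can evaluate on
  numerals, needed to compute the dual explicitly.\<close>
lemma levi_civita_eval:
  "levi_civita a b c d =
     (let xs = [a, b, c, d] in
      if distinct xs \<and> set xs \<subseteq> {..<4}
      then (-1) ^ length (filter (\<lambda>(i,j). xs ! j < xs ! i)
                               [(0,1),(0,2),(0,3),(1,2),(1,3),(2,3)])
      else 0)"
  unfolding levi_civita_def Let_def inversion_pairs_4
  by (subst distinct_card[symmetric]) (auto intro: distinct_filter)

definition dual :: "(nat \<Rightarrow> nat \<Rightarrow> real) \<Rightarrow> nat \<Rightarrow> nat \<Rightarrow> real" where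
  "dual X r s = (\<Sum>a<4. \<Sum>b<4. levi_civita r s a b * X a b)"

lemma kappa_dual:
  "kappa \<rho> A B f i j r s =
     \<rho> * (dual A r s * B i j + A i j * dual B r s) + f * (kron i r * kron j s - kron i s * kron j r)"
proof -
  have "(\<Sum>a<4. \<Sum>b<4. levi_civita r s a b * (A a b * B i j + A i j * B a b))
      = (\<Sum>a<4. \<Sum>b<4. (levi_civita r s a b * A a b) * B i j + A i j * (levi_civita r s a b * B a b))"
    by (intro sum.cong refl) (simp add: distrib_left mult.assoc mult.left_commute)
  also have "\<dots> = dual A r s * B i j + A i j * dual B r s"
    unfolding dual_def by (simp only: sum.distrib sum_distrib_left sum_distrib_right)
  finally show ?thesis unfolding kappa_def by simp
qed

lemma dual_upper_raw:
  "dual X 0 1 = X 2 3 - X 3 2" "dual X 0 2 = X 3 1 - X 1 3" "dual X 0 3 = X 1 2 - X 2 1"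
  "dual X 1 2 = X 0 3 - X 3 0" "dual X 1 3 = X 2 0 - X 0 2" "dual X 2 3 = X 0 1 - X 1 0"
  unfolding dual_def sum_lessThan_4 by (simp_all add: levi_civita_eval)

lemma dual_upper:
  assumes "antisym4 X"
  shows "dual X 0 1 = 2 * X 2 3" "dual X 0 2 = -2 * X 1 3" "dual X 0 3 = 2 * X 1 2"
        "dual X 1 2 = 2 * X 0 3" "dual X 1 3 = -2 * X 0 2" "dual X 2 3 = 2 * X 0 1"
proof -
  have swap: "X i j = - X j i" if "i < 4" "j < 4" for i j
    using assms that unfolding antisym4_def by blast
  have "X 3 2 = - X 2 3" "X 3 1 = - X 1 3" "X 2 1 = - X 1 2"
       "X 3 0 = - X 0 3" "X 2 0 = - X 0 2" "X 1 0 = - X 0 1"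
    using swap[of 3 2] swap[of 3 1] swap[of 2 1] swap[of 3 0] swap[of 2 0] swap[of 1 0] by simp_all
  then show "dual X 0 1 = 2 * X 2 3" "dual X 0 2 = -2 * X 1 3" "dual X 0 3 = 2 * X 1 2"
            "dual X 1 2 = 2 * X 0 3" "dual X 1 3 = -2 * X 0 2" "dual X 2 3 = 2 * X 0 1"
    unfolding dual_upper_raw by simp_all
qed

text \<open>Every upper component is a nonzero multiple, independent of X, of a
  dual component.  This lets us move from the dual side of kappa to A and B.\<close>
lemma upper_component_as_dual:
  assumes "k < l" "l < 4"
  shows "\<exists>r s c. r < 4 \<and> s < 4 \<and> c \<noteq> (0::real) \<and> (\<forall>X. antisym4 X \<longrightarrow> dual X r s = c * X k l)"
proof -
  have "(k, l) \<in> {(0,1),(0,2),(0,3),(1,2),(1,3),(2,3)}"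
    using assms by (auto simp: less_Suc_eq numeral_eq_Suc)
  then consider "k = 0" "l = 1" | "k = 0" "l = 2" | "k = 0" "l = 3"
              | "k = 1" "l = 2" | "k = 1" "l = 3" | "k = 2" "l = 3"
    by auto
  then show ?thesis
  proof cases
    case 1 then show ?thesis using dual_upper by (intro exI[of _ 2] exI[of _ 3] exI[of _ 2]) simp
  next
    case 2 then show ?thesis using dual_upper by (intro exI[of _ 1] exI[of _ 3] exI[of _ "-2"]) simp
  next
    case 3 then show ?thesis using dual_upper by (intro exI[of _ 1] exI[of _ 2] exI[of _ 2]) simp
  next
    case 4 then show ?thesis using dual_upper by (intro exI[of _ 0] exI[of _ 3] exI[of _ 2]) simp
  next
    case 5 then show ?thesis using dual_upper by (intro exI[of _ 0] exI[of _ 2] exI[of _ "-2"]) simp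
  next
    case 6 then show ?thesis using dual_upper by (intro exI[of _ 0] exI[of _ 1] exI[of _ 2]) simp
  qed
qed

lemma zero4_if_upper_zero:
  assumes "antisym4 X" and upper: "\<And>k l. k < l \<Longrightarrow> l < 4 \<Longrightarrow> X k l = 0"
  shows "zero4 X"
  unfolding zero4_def
proof (intro allI impI)
  fix i j :: nat assume "i < 4" "j < 4"
  then have swap: "X i j = - X j i" using assms(1) unfolding antisym4_def by blast
  consider "i < j" | "i = j" | "j < i" by linarith
  then show "X i j = 0"
  proof cases
    case 1 then show ?thesis using upper \<open>j < 4\<close> by blast
  next
    case 2 then show ?thesis using swap by simp
  next
    case 3 then have "X j i = 0" using upper \<open>i < 4\<close> by blast
    then show ?thesis using swap by simp
  qed
qed

text \<open>A 3x3 matrix of rank at most two, u v^T + a w^T, is a scalar matrix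
  c I only for c = 0: its determinant vanishes identically, but equals c^3.\<close>
lemma rank_two_not_scalar:
  fixes u a v w :: "nat \<Rightarrow> real"
  assumes "\<And>i j. i < 3 \<Longrightarrow> j < 3 \<Longrightarrow> u i * v j + a i * w j = (if i = j then c else 0)"
  shows "c = 0"
proof -
  define m where "m i j = u i * v j + a i * w j" for i j
  have "m 0 0 * (m 1 1 * m 2 2 - m 1 2 * m 2 1) - m 0 1 * (m 1 0 * m 2 2 - m 1 2 * m 2 0)
        + m 0 2 * (m 1 0 * m 2 1 - m 1 1 * m 2 0) = 0"
    unfolding m_def by algebra
  moreover have "m i j = (if i = j then c else 0)" if "i < 3" "j < 3" for i j
    using assms that unfolding m_def by blast
  ultimately have "c * c * c = 0" by simp
  then show "c = 0" by simp
qed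

lemma symmetric_product_zero:
  fixes a b :: "'i \<Rightarrow> real"
  assumes "\<forall>I\<in>S. \<forall>J\<in>S. a I * b J + b I * a J = 0"
  shows "(\<forall>I\<in>S. a I = 0) \<or> (\<forall>I\<in>S. b I = 0)"
proof (rule ccontr)
  assume "\<not> ?thesis"
  then obtain K where K: "K \<in> S" "a K \<noteq> 0" by auto
  from assms K have "a K * b K + b K * a K = 0" by blast
  with K have bK: "b K = 0" by simp
  have "\<forall>J\<in>S. b J = 0"
  proof
    fix J assume "J \<in> S"
    with assms K have "a K * b J + b K * a J = 0" by blast
    with bK K show "b J = 0" by simp
  qed
  with \<open>\<not> ?thesis\<close> show False by blast
qed

text \<open>Step (1): the identity part of a vanishing kappa is zero.\<close>
lemma kappa_zero_scalar_part:
  assumes "\<forall>i<4. \<forall>j<4. \<forall>r<4. \<forall>s<4. kappa \<rho> A B f i j r s = 0"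
  shows "f = 0"
proof -
  have block: "(\<rho> * B 0 (Suc i)) * dual A 0 (Suc j) + (\<rho> * A 0 (Suc i)) * dual B 0 (Suc j)
        = (if i = j then - f else 0)" if "i < 3" "j < 3" for i j
    using assms that kappa_dual[of \<rho> A B f 0 "Suc i" 0 "Suc j"]
    by (cases "i = j") (auto simp: kron_def algebra_simps)
  have "- f = 0"
    by (rule rank_two_not_scalar[where u = "\<lambda>i. \<rho> * B 0 (Suc i)" and v = "\<lambda>j. dual A 0 (Suc j)"
          and a = "\<lambda>i. \<rho> * A 0 (Suc i)" and w = "\<lambda>j. dual B 0 (Suc j)"])
       (simp add: block)
  then show "f = 0" by simp
qed

text \<open>Step (2): if kappa vanishes without its identity part and rho is nonzero,
  then by Hodge duality A b + B a = 0 on upper pairs, so A or B vanishes.\<close>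
lemma kappa_zero_factors:
  assumes "antisym4 A" "antisym4 B" "\<rho> \<noteq> 0"
    and "\<forall>i<4. \<forall>j<4. \<forall>r<4. \<forall>s<4. kappa \<rho> A B 0 i j r s = 0"
  shows "zero4 A \<or> zero4 B"
proof -
  let ?S = "{(k, l). k < l \<and> l < (4::nat)}"
  have "A i j * B k l + B i j * A k l = 0" if "(i, j) \<in> ?S" "(k, l) \<in> ?S" for i j k l
  proof -
    have "i < j" "j < 4" "k < l" "l < 4" using that by simp_all
    then obtain r s c where rs: "r < 4" "s < 4"
      and c: "c \<noteq> 0" "dual A r s = c * A k l" "dual B r s = c * B k l"
      using upper_component_as_dual assms(1,2) by meson
    have "(\<rho> * c) * (A i j * B k l + B i j * A k l) = \<rho> * (dual A r s * B i j + A i j * dual B r s)"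
      unfolding c(2,3) by algebra
    also have "\<dots> = kappa \<rho> A B 0 i j r s"
      by (simp add: kappa_dual)
    also have "\<dots> = 0"
      using assms(4) rs \<open>i < j\<close> \<open>j < 4\<close> by simp
    finally show ?thesis using c(1) assms(3) by simp
  qed
  then have "(\<forall>I\<in>?S. case_prod A I = 0) \<or> (\<forall>I\<in>?S. case_prod B I = 0)"
    by (intro symmetric_product_zero) auto
  then show ?thesis
  proof
    assume "\<forall>I\<in>?S. case_prod A I = 0"
    then have "zero4 A" by (intro zero4_if_upper_zero[OF assms(1)]) auto
    then show ?thesis ..
  next
    assume "\<forall>I\<in>?S. case_prod B I = 0"
    then have "zero4 B" by (intro zero4_if_upper_zero[OF assms(2)]) auto
    then show ?thesis ..
  qed
qed

theorem mainTheorem2: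
  fixes \<rho> f :: real and A B :: "nat \<Rightarrow> nat \<Rightarrow> real"
  assumes "antisym4 A" and "antisym4 B"
    and "\<forall>i<4. \<forall>j<4. \<forall>r<4. \<forall>s<4. kappa \<rho> A B f i j r s = 0"
  shows "f = 0 \<and> (\<rho> = 0 \<or> zero4 A \<or> zero4 B)"
proof -
  have f0: "f = 0" using kappa_zero_scalar_part[OF assms(3)] .
  have "zero4 A \<or> zero4 B" if "\<rho> \<noteq> 0"
    using kappa_zero_factors[OF assms(1,2) that] assms(3) f0 by blast
  with f0 show ?thesis by blast
qed

end
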